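(* Let $v$ be a weight on $[0,1)$ satisfying $\lim_{r\to1^-}v(r)=0$. For each $t\in[0,1)$ both operators $C_t\colon H^\infty_v\to H^\infty_v$ and $C_t\colon H^0_v\to H^0_v$ are power bounded, uniformly mean ergodic, and not supercyclic.
   Context: $\mathbb{D}=\{z\in\mathbb{C}:|z|<1\}$ and $H(\mathbb{D})$ is the space of holomorphic functions on $\mathbb{D}$. A weight is a continuous non-increasing function $v\colon[0,1)\to(0,\infty)$, extended to $\mathbb{D}$ by $v(z):=v(|z|)$. $H^\infty_v=\{f\in H(\mathbb{D}):\|f\|_{\infty,v}:=\sup_{z\in\mathbb{D}}|f(z)|v(z)<\infty\}$ and $H^0_v=\{f\in H(\mathbb{D}):\lim_{|z|\to1^-}|f(z)|v(z)=0\}$, both with the norm $\|\cdot\|_{\infty,v}$. For $t\in[0,1]$, $C_t$ is defined on $f\in H(\mathbb{D})$ by $C_tf(0)=f(0)$ and $C_tf(z)=\frac{1}{z}\int_0^z\frac{f(\xi)}{1-t\xi}\,d\xi$ for $z\neq0$. A bounded operator $T$ on a Banach space $X$ is power bounded if $\sup_{n\in\mathbb{N}_0}\|T^n\|<\infty$; it is uniformly mean ergodic if the Cesàro means $T_{[n]}=\frac1n\sum_{m=1}^nT^m$ converge in operator norm; it is supercyclic if there is $z\in X$ such that $\{\lambda T^nz:\lambda\in\mathbb{C},n\in\mathbb{N}_0\}$ is dense in $X$. *)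

theory Defs
  imports "HOL-Complex_Analysis.Complex_Analysis"
begin

definition is_weight :: "(real \<Rightarrow> real) \<Rightarrow> bool" where
  "is_weight v \<longleftrightarrow> continuous_on {0..<1} v
     \<and> (\<forall>r s. 0 \<le> r \<longrightarrow> r \<le> s \<longrightarrow> s < 1 \<longrightarrow> v s \<le> v r)
     \<and> (\<forall>r. 0 \<le> r \<longrightarrow> r < 1 \<longrightarrow> v r > 0)"

definition wnorm :: "(real \<Rightarrow> real) \<Rightarrow> (complex \<Rightarrow> complex) \<Rightarrow> real" where
  "wnorm v f = (SUP z\<in>ball 0 1. cmod (f z) * v (cmod z))"

definition Hinf_v :: "(real \<Rightarrow> real) \<Rightarrow> (complex \<Rightarrow> complex) set" where
  "Hinf_v v = {f. f holomorphic_on ball 0 1 \<and>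
      (\<exists>M. \<forall>z\<in>ball 0 1. cmod (f z) * v (cmod z) \<le> M)}"

definition H0_v :: "(real \<Rightarrow> real) \<Rightarrow> (complex \<Rightarrow> complex) set" where
  "H0_v v = {f. f holomorphic_on ball 0 1 \<and>
      (\<forall>e>0. \<exists>r<1. \<forall>z. r < cmod z \<and> cmod z < 1 \<longrightarrow> cmod (f z) * v (cmod z) < e)}"

definition Cesaro_t :: "real \<Rightarrow> (complex \<Rightarrow> complex) \<Rightarrow> (complex \<Rightarrow> complex)" where
  "Cesaro_t t f = (\<lambda>z. if z = 0 then f 0
      else contour_integral (linepath 0 z) (\<lambda>\<xi>. f \<xi> / (1 - complex_of_real t * \<xi>)) / z)"

definition power_bounded_on ::
  "'a set \<Rightarrow> ('a \<Rightarrow> real) \<Rightarrow> ('a \<Rightarrow> 'a) \<Rightarrow> bool" where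
  "power_bounded_on X N T \<longleftrightarrow> (\<forall>f\<in>X. T f \<in> X) \<and>
     (\<exists>M. \<forall>n. \<forall>f\<in>X. N ((T ^^ n) f) \<le> M * N f)"

definition cesaro_mean :: "nat \<Rightarrow> ((complex \<Rightarrow> complex) \<Rightarrow> (complex \<Rightarrow> complex))
     \<Rightarrow> (complex \<Rightarrow> complex) \<Rightarrow> (complex \<Rightarrow> complex)" where
  "cesaro_mean n T f = (\<lambda>z. (\<Sum>m=1..n. (T ^^ m) f z) / of_nat n)"

definition uniformly_mean_ergodic_on ::
  "(complex \<Rightarrow> complex) set \<Rightarrow> ((complex \<Rightarrow> complex) \<Rightarrow> real)
     \<Rightarrow> ((complex \<Rightarrow> complex) \<Rightarrow> (complex \<Rightarrow> complex)) \<Rightarrow> bool" where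
  "uniformly_mean_ergodic_on X N T \<longleftrightarrow> (\<forall>f\<in>X. T f \<in> X) \<and>
     (\<exists>P. (\<forall>f\<in>X. P f \<in> X) \<and>
        (\<forall>e>0. \<exists>n0. \<forall>n\<ge>n0. \<forall>f\<in>X.
            N (\<lambda>z. cesaro_mean n T f z - P f z) \<le> e * N f))"

definition supercyclic_on ::
  "(complex \<Rightarrow> complex) set \<Rightarrow> ((complex \<Rightarrow> complex) \<Rightarrow> real)
     \<Rightarrow> ((complex \<Rightarrow> complex) \<Rightarrow> (complex \<Rightarrow> complex)) \<Rightarrow> bool" where
  "supercyclic_on X N T \<longleftrightarrow> (\<exists>g\<in>X. \<forall>f\<in>X. \<forall>e>0. \<exists>(c::complex) n.
       N (\<lambda>z. c * (T ^^ n) g z - f z) < e)"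

end

theory Submission
  imports Defs
begin

text \<open>
  Since \<open>C\<^sub>t h(z)\<close> is the average over \<open>s \<in> [0,1]\<close> of \<open>h(sz) / (1 - tsz)\<close>, a radial majorant
  of \<open>|h|\<close> is carried along by the iterates, and the functions
  \<open>e\<^sub>k(z) = z\<^sup>k / (1 - tz)\<^bsup>k+1\<^esup>\<close> satisfy \<open>C\<^sub>t e\<^sub>k = e\<^sub>k / (k+1)\<close>: if \<open>|h(w)| \<le> c e\<^sub>k(|w|)\<close>
  then \<open>|C\<^sub>t\<^sup>n h(w)| \<le> c (k+1)\<^sup>-\<^sup>n e\<^sub>k(|w|)\<close>. With \<open>k = 0\<close> this bounds every power of \<open>C\<^sub>t\<close>
  by \<open>1/(1-t)\<close>. If \<open>f(0) = 0\<close>, the Schwarz lemma gives \<open>|f(w)| \<le> C |w| \<le> C e\<^sub>1(|w|)\<close>, so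
  \<open>C\<^sub>t\<^sup>n f = O(2\<^sup>-\<^sup>n)\<close>; applied to \<open>f - f(0) e\<^sub>0\<close> this shows that \<open>C\<^sub>t\<^sup>n\<close> converges
  geometrically in operator norm to the projection \<open>f \<mapsto> f(0) e\<^sub>0\<close>, hence so do the Cesaro means.
  Finally \<open>C\<^sub>t\<^sup>n g(0) = g(0)\<close> and the orbit of \<open>g\<close> is bounded at \<open>1/2\<close>: approximating \<open>1 + Lz\<close>
  by \<open>c C\<^sub>t\<^sup>n g\<close> at \<open>0\<close> bounds \<open>|c|\<close>, and then the value at \<open>1/2\<close> cannot reach \<open>1 + L/2\<close> once
  \<open>L\<close> is large, so \<open>C\<^sub>t\<close> is not supercyclic.
\<close>

section \<open>Holomorphy and an integral formula for the Cesaro operator\<close>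

lemma norm_one_minus_mult_ge:
  assumes "0 \<le> t" "norm \<xi> \<le> r"
  shows "1 - t * r \<le> norm (1 - complex_of_real t * \<xi>)"
proof -
  have "norm (complex_of_real t * \<xi>) \<le> t * r"
    using assms by (simp add: norm_mult mult_left_mono)
  moreover have "1 - norm (complex_of_real t * \<xi>) \<le> norm (1 - complex_of_real t * \<xi>)"
    by (metis norm_one norm_triangle_ineq2)
  ultimately show ?thesis by linarith
qed

lemma one_minus_mult_pos:
  fixes t x :: real
  assumes "0 \<le> t" "t < 1" "0 \<le> x" "x < 1"
  shows "0 < 1 - t * x" "1 - t \<le> 1 - t * x" "1 - t * x \<le> 1"
proof -
  have "t * x \<le> t" "0 \<le> t * x"
    using assms mult_left_mono[of x 1 t] by auto
  then show "0 < 1 - t * x" "1 - t \<le> 1 - t * x" "1 - t * x \<le> 1"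
    using assms by auto
qed

lemma one_minus_mult_nonzero:
  assumes "0 \<le> t" "t < 1" "norm \<xi> < 1"
  shows "1 - complex_of_real t * \<xi> \<noteq> 0"
proof -
  have "0 < 1 - t * norm \<xi>"
    using one_minus_mult_pos[OF assms(1,2) norm_ge_zero assms(3)] by simp
  also have "\<dots> \<le> norm (1 - complex_of_real t * \<xi>)"
    using norm_one_minus_mult_ge[OF assms(1) order_refl] .
  finally show ?thesis by auto
qed

lemma closed_segment_0_subset_ball: "z \<in> ball 0 1 \<Longrightarrow> closed_segment 0 z \<subseteq> ball (0::complex) 1"
  by (simp add: closed_segment_subset)

lemma Cesaro_t_0 [simp]: "Cesaro_t t f 0 = f 0"
  by (simp add: Cesaro_t_def)

lemma Cesaro_t_eq_primitive:
  assumes P: "\<And>x. x \<in> ball 0 1 \<Longrightarrow> (P has_field_derivative g x / (1 - complex_of_real t * x)) (at x)"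
    and z: "z \<in> ball 0 1" "z \<noteq> 0"
  shows "Cesaro_t t g z = (P z - P 0) / z"
proof -
  have "((\<lambda>x. g x / (1 - complex_of_real t * x)) has_contour_integral P z - P 0) (linepath 0 z)"
    using contour_integral_primitive[OF _ valid_path_linepath, of "ball 0 1" P]
      P closed_segment_0_subset_ball[OF z(1)] by (simp add: has_field_derivative_at_within)
  then show ?thesis
    using z by (simp add: Cesaro_t_def contour_integral_unique)
qed

lemma holomorphic_on_ball_primitive:
  fixes g :: "complex \<Rightarrow> complex"
  assumes g: "g holomorphic_on ball a r"
  shows "\<exists>P. \<forall>x \<in> ball a r. (P has_field_derivative g x) (at x)"
proof (cases "0 < r")
  case True
  show ?thesis
  proof (rule holomorphic_starlike_primitive[where k = "{}"])
    show "starlike (ball a r)"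
      using True by (simp add: convex_imp_starlike)
    show "x \<in> ball a r - {} \<Longrightarrow> g field_differentiable at x" for x
      using g by (simp add: holomorphic_on_imp_differentiable_at)
  qed (use g holomorphic_on_imp_continuous_on in auto)
qed (metis ball_eq_empty empty_iff not_less)

lemma holomorphic_on_Cesaro_t:
  assumes t: "0 \<le> t" "t < 1" and f: "f holomorphic_on ball 0 1"
  shows "Cesaro_t t f holomorphic_on ball 0 1"
proof -
  define g where "g \<xi> = f \<xi> / (1 - complex_of_real t * \<xi>)" for \<xi>
  have "g holomorphic_on ball 0 1"
    unfolding g_def using f one_minus_mult_nonzero[OF t] by (auto intro!: holomorphic_intros)
  then obtain P where P: "\<And>x. x \<in> ball 0 1 \<Longrightarrow> (P has_field_derivative g x) (at x)"
    using holomorphic_on_ball_primitive by blast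
  then have "P holomorphic_on ball 0 1"
    unfolding holomorphic_on_open[OF open_ball] by blast
  then have "(\<lambda>z. if z = 0 then deriv P 0 else (P z - P 0) / (z - 0)) holomorphic_on ball 0 1"
    by (rule pole_lemma_open) simp
  then show ?thesis
  proof (rule holomorphic_transform)
    fix z :: complex assume z: "z \<in> ball 0 1"
    have "deriv P 0 = f 0"
      using DERIV_imp_deriv[OF P[of 0]] by (simp add: g_def)
    moreover have "Cesaro_t t f z = (P z - P 0) / z" if "z \<noteq> 0"
      using Cesaro_t_eq_primitive[OF _ z that] P unfolding g_def by blast
    ultimately show "(if z = 0 then deriv P 0 else (P z - P 0) / (z - 0)) = Cesaro_t t f z"
      by simp
  qed
qed

lemma Cesaro_t_eq_integral:
  "Cesaro_t t h z =
     integral {0..1} (\<lambda>s. h (complex_of_real s * z) / (1 - complex_of_real t * (complex_of_real s * z)))"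
proof (cases "z = 0")
  case False
  define F where "F = (\<lambda>s. h (complex_of_real s * z) / (1 - complex_of_real t * (complex_of_real s * z)))"
  have "Cesaro_t t h z = integral {0..1} (\<lambda>s. F s * z) / z"
    using False by (simp add: Cesaro_t_def contour_integral_integral linepath_def scaleR_conv_of_real F_def)
  also have "\<dots> = integral {0..1} F"
    using False by (simp del: times_divide_eq_left)
  finally show ?thesis
    by (simp only: F_def)
qed simp

lemma of_real_mult_in_ball:
  assumes "0 \<le> s" "s \<le> 1" "z \<in> ball 0 1"
  shows "complex_of_real s * z \<in> ball 0 1"
  using assms mult_left_le_one_le[of "norm z" s] by (simp add: norm_mult)

lemma norm_Cesaro_t_le_majorant:
  assumes t: "0 \<le> t" "t < 1"
    and h: "continuous_on (ball 0 1) h" and m: "continuous_on (ball 0 1) m"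
    and z: "z \<in> ball 0 1"
    and le: "\<And>s. 0 \<le> s \<Longrightarrow> s \<le> 1 \<Longrightarrow>
               norm (h (complex_of_real s * z)) \<le> c * Re (m (complex_of_real (s * norm z)))"
  shows "norm (Cesaro_t t h z) \<le> c * Re (Cesaro_t t m (complex_of_real (norm z)))"
proof -
  define r where "r = norm z"
  have r: "complex_of_real r \<in> ball 0 1"
    using z by (simp add: r_def)
  have integrable: "(\<lambda>s. g (complex_of_real s * w) / (1 - complex_of_real t * (complex_of_real s * w)))
      integrable_on {0..1}"
    if "continuous_on (ball 0 1) g" "w \<in> ball 0 1" for g w
    using that of_real_mult_in_ball[OF _ _ that(2)]
      one_minus_mult_nonzero[OF t, of "complex_of_real _ * w"]
    by (intro integrable_continuous_interval continuous_intros continuous_on_compose2[OF that(1)]) auto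
  define M where "M s = m (complex_of_real s * complex_of_real r)
      / (1 - complex_of_real t * (complex_of_real s * complex_of_real r))" for s
  have "norm (h (complex_of_real s * z) / (1 - complex_of_real t * (complex_of_real s * z)))
      \<le> inner (complex_of_real c * M s) 1"
    if s: "s \<in> {0..1}" for s
  proof -
    have pos: "0 < 1 - t * (s * r)"
      using one_minus_mult_pos[OF t, of "s * r"] s z mult_left_le_one_le[of r s]
      by (auto simp: r_def)
    have "norm (h (complex_of_real s * z) / (1 - complex_of_real t * (complex_of_real s * z)))
        \<le> c * Re (m (complex_of_real (s * r))) / (1 - t * (s * r))"
      using s pos le[of s] norm_one_minus_mult_ge[OF t(1), of "complex_of_real s * z" "s * r"]
      by (auto simp: norm_divide norm_mult r_def intro!: frac_le order_trans[OF norm_ge_zero])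
    also have "\<dots> = inner (complex_of_real c * M s) 1"
      by (simp flip: of_real_mult of_real_diff add: M_def Re_divide_of_real)
    finally show ?thesis .
  qed
  then have "norm (Cesaro_t t h z) \<le> inner (integral {0..1} (\<lambda>s. complex_of_real c * M s)) 1"
    unfolding Cesaro_t_eq_integral M_def
    by (intro integral_norm_bound_integral_component integrable_on_cmult_left integrable h z m r)
  also have "\<dots> = c * Re (Cesaro_t t m (complex_of_real (norm z)))"
    by (simp only: integral_mult_right) (simp add: Cesaro_t_eq_integral[of t m] M_def r_def)
  finally show ?thesis .
qed

section \<open>Eigenfunctions and iterates on discs\<close>

lemma Cesaro_t_cong:
  assumes "\<And>w. w \<in> ball 0 1 \<Longrightarrow> f w = g w" "z \<in> ball 0 1"
  shows "Cesaro_t t f z = Cesaro_t t g z"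
proof -
  have "contour_integral (linepath 0 z) (\<lambda>\<xi>. f \<xi> / (1 - complex_of_real t * \<xi>))
      = contour_integral (linepath 0 z) (\<lambda>\<xi>. g \<xi> / (1 - complex_of_real t * \<xi>))"
    using assms closed_segment_0_subset_ball[OF assms(2)] by (intro contour_integral_cong) auto
  then show ?thesis
    using assms by (simp add: Cesaro_t_def)
qed

lemma Cesaro_t_diff_mult:
  assumes t: "0 \<le> t" "t < 1"
    and f: "continuous_on (ball 0 1) f" and g: "continuous_on (ball 0 1) g"
    and z: "z \<in> ball 0 1"
  shows "Cesaro_t t (\<lambda>w. f w - c * g w) z = Cesaro_t t f z - c * Cesaro_t t g z"
proof (cases "z = 0")
  case False
  have seg: "closed_segment 0 z \<subseteq> ball 0 1"
    using closed_segment_0_subset_ball[OF z] .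
  have integrable: "(\<lambda>\<xi>. h \<xi> / (1 - complex_of_real t * \<xi>)) contour_integrable_on linepath 0 z"
    if "continuous_on (ball 0 1) h" for h
    using seg one_minus_mult_nonzero[OF t]
    by (intro contour_integrable_continuous_linepath continuous_intros
        continuous_on_subset[OF that seg]) auto
  have "contour_integral (linepath 0 z) (\<lambda>\<xi>. (f \<xi> - c * g \<xi>) / (1 - complex_of_real t * \<xi>))
     = contour_integral (linepath 0 z) (\<lambda>\<xi>. f \<xi> / (1 - complex_of_real t * \<xi>)
         - c * (g \<xi> / (1 - complex_of_real t * \<xi>)))"
    by (simp add: diff_divide_distrib)
  also have "\<dots> = contour_integral (linepath 0 z) (\<lambda>\<xi>. f \<xi> / (1 - complex_of_real t * \<xi>))
      - c * contour_integral (linepath 0 z) (\<lambda>\<xi>. g \<xi> / (1 - complex_of_real t * \<xi>))"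
    using contour_integral_diff[OF integrable[OF f] contour_integrable_lmul[OF integrable[OF g], of c]]
      contour_integral_lmul[OF integrable[OF g], of c]
    by simp
  finally show ?thesis
    using False by (simp add: Cesaro_t_def diff_divide_distrib)
qed simp

definition Cesaro_eigen :: "real \<Rightarrow> nat \<Rightarrow> complex \<Rightarrow> complex" where
  "Cesaro_eigen t k z = z ^ k / (1 - complex_of_real t * z) ^ Suc k"

lemma holomorphic_on_Cesaro_eigen:
  "0 \<le> t \<Longrightarrow> t < 1 \<Longrightarrow> Cesaro_eigen t k holomorphic_on ball 0 1"
  unfolding Cesaro_eigen_def using one_minus_mult_nonzero by (auto intro!: holomorphic_intros)

lemma Cesaro_eigen_of_real:
  "Cesaro_eigen t k (complex_of_real x) = complex_of_real (x ^ k / (1 - t * x) ^ Suc k)"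
  by (simp add: Cesaro_eigen_def)

lemma Cesaro_t_Cesaro_eigen:
  assumes t: "0 \<le> t" "t < 1" and z: "z \<in> ball 0 1"
  shows "Cesaro_t t (Cesaro_eigen t k) z = Cesaro_eigen t k z / of_nat (Suc k)"
proof (cases "z = 0")
  case True
  then show ?thesis
    by (cases k) (simp_all add: Cesaro_eigen_def)
next
  case False
  define P where "P = (\<lambda>x. (x / (1 - complex_of_real t * x)) ^ Suc k / of_nat (Suc k))"
  have "(P has_field_derivative Cesaro_eigen t k x / (1 - complex_of_real t * x)) (at x)"
    if "x \<in> ball 0 1" for x
  proof -
    have nz: "1 - complex_of_real t * x \<noteq> 0"
      using one_minus_mult_nonzero[OF t] that by simp
    have "((\<lambda>x. x / (1 - complex_of_real t * x)) has_field_derivative 1 / (1 - complex_of_real t * x)^2) (at x)"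
      by (rule derivative_eq_intros refl | use nz in \<open>simp add: field_simps power2_eq_square\<close>)+
    from DERIV_power[OF this, of "Suc k"]
    have "(P has_field_derivative of_nat (Suc k)
        * (1 / (1 - complex_of_real t * x)^2 * (x / (1 - complex_of_real t * x)) ^ k) / of_nat (Suc k)) (at x)"
      unfolding P_def by (intro DERIV_cdivide) (simp only: diff_Suc_Suc diff_zero)
    moreover have "of_nat (Suc k) * (1 / D\<^sup>2 * (x / D) ^ k) / of_nat (Suc k) = x ^ k / D ^ Suc k / D"
      if "D \<noteq> 0" for D :: complex
      using that by (simp add: power_divide power2_eq_square field_simps del: of_nat_Suc)
    ultimately show ?thesis
      unfolding Cesaro_eigen_def using nz by (metis DERIV_cong)
  qed
  then have "Cesaro_t t (Cesaro_eigen t k) z = (P z - P 0) / z"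
    by (rule Cesaro_t_eq_primitive[OF _ z False])
  also have "\<dots> = z ^ k / (1 - complex_of_real t * z) ^ Suc k / of_nat (Suc k)"
    using False by (simp add: P_def power_divide del: of_nat_Suc)
  finally show ?thesis
    by (simp only: Cesaro_eigen_def)
qed

lemma holomorphic_on_Cesaro_t_iter:
  "0 \<le> t \<Longrightarrow> t < 1 \<Longrightarrow> h holomorphic_on ball 0 1 \<Longrightarrow> (Cesaro_t t ^^ n) h holomorphic_on ball 0 1"
  by (induction n) (auto intro: holomorphic_on_Cesaro_t)

lemma Cesaro_t_iter_0 [simp]: "(Cesaro_t t ^^ n) h 0 = h 0"
  by (induction n) auto

lemma norm_Cesaro_t_iter_le:
  assumes t: "0 \<le> t" "t < 1" and h: "h holomorphic_on ball 0 1" and \<rho>: "\<rho> < 1"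
    and le: "\<And>w. norm w \<le> \<rho> \<Longrightarrow> norm (h w) \<le> c * (norm w ^ k / (1 - t * norm w) ^ Suc k)"
    and w: "norm w \<le> \<rho>"
  shows "norm ((Cesaro_t t ^^ n) h w) \<le> c / real (Suc k) ^ n * (norm w ^ k / (1 - t * norm w) ^ Suc k)"
  using w
proof (induction n arbitrary: w)
  case 0
  then show ?case using le by simp
next
  case (Suc n)
  have w: "w \<in> ball 0 1"
    using Suc.prems \<rho> by simp
  have "norm (Cesaro_t t ((Cesaro_t t ^^ n) h) w)
      \<le> c / real (Suc k) ^ n * Re (Cesaro_t t (Cesaro_eigen t k) (complex_of_real (norm w)))"
  proof (rule norm_Cesaro_t_le_majorant[OF t _ _ w])
    show "continuous_on (ball 0 1) ((Cesaro_t t ^^ n) h)" "continuous_on (ball 0 1) (Cesaro_eigen t k)"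
      using holomorphic_on_Cesaro_t_iter[OF t h] holomorphic_on_Cesaro_eigen[OF t]
      by (auto intro: holomorphic_on_imp_continuous_on)
    fix s :: real assume s: "0 \<le> s" "s \<le> 1"
    have "norm (complex_of_real s * w) \<le> \<rho>"
      using s Suc.prems mult_left_le_one_le[of "norm w" s] by (simp add: norm_mult)
    then have "norm ((Cesaro_t t ^^ n) h (complex_of_real s * w))
        \<le> c / real (Suc k) ^ n * ((s * norm w) ^ k / (1 - t * (s * norm w)) ^ Suc k)"
      using Suc.IH[of "complex_of_real s * w"] s by (simp add: norm_mult)
    then show "norm ((Cesaro_t t ^^ n) h (complex_of_real s * w))
        \<le> c / real (Suc k) ^ n * Re (Cesaro_eigen t k (complex_of_real (s * norm w)))"
      by (simp only: Cesaro_eigen_of_real Re_complex_of_real)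
  qed
  also have "\<dots> = c / real (Suc k) ^ n * ((norm w ^ k / (1 - t * norm w) ^ Suc k) / Suc k)"
    using w by (simp add: Cesaro_t_Cesaro_eigen[OF t] Cesaro_eigen_of_real Re_divide_of_nat)
  also have "\<dots> = c / real (Suc k) ^ Suc n * (norm w ^ k / (1 - t * norm w) ^ Suc k)"
    by (simp add: power_Suc mult_ac del: of_nat_Suc)
  finally show ?case by simp
qed

lemma Cesaro_t_iter_diff_Cesaro_eigen_0:
  assumes t: "0 \<le> t" "t < 1" and f: "f holomorphic_on ball 0 1" and z: "z \<in> ball 0 1"
  shows "(Cesaro_t t ^^ n) (\<lambda>w. f w - c * Cesaro_eigen t 0 w) z
       = (Cesaro_t t ^^ n) f z - c * Cesaro_eigen t 0 z"
  using z
proof (induction n arbitrary: z)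
  case (Suc n)
  have "(Cesaro_t t ^^ Suc n) (\<lambda>w. f w - c * Cesaro_eigen t 0 w) z
      = Cesaro_t t (\<lambda>w. (Cesaro_t t ^^ n) f w - c * Cesaro_eigen t 0 w) z"
    using Cesaro_t_cong[OF Suc.IH Suc.prems] by simp
  also have "\<dots> = Cesaro_t t ((Cesaro_t t ^^ n) f) z - c * Cesaro_t t (Cesaro_eigen t 0) z"
    using holomorphic_on_Cesaro_t_iter[OF t f] holomorphic_on_Cesaro_eigen[OF t]
    by (intro Cesaro_t_diff_mult[OF t _ _ Suc.prems] holomorphic_on_imp_continuous_on)
  also have "\<dots> = (Cesaro_t t ^^ Suc n) f z - c * Cesaro_eigen t 0 z"
    using Cesaro_t_Cesaro_eigen[OF t Suc.prems, of 0] by simp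
  finally show ?case .
qed simp

lemma Schwarz_Lemma_scaled:
  assumes g: "g holomorphic_on ball 0 1" and g0: "g 0 = 0" and R: "0 < R" "R < 1"
    and le: "\<And>w. norm w \<le> R \<Longrightarrow> norm (g w) \<le> B" and w: "norm w \<le> R"
  shows "norm (g w) \<le> 2 * B * norm w / R"
proof (cases "B = 0 \<or> norm w = R")
  case True
  moreover have "0 \<le> B"
    using le[of 0] R by (metis less_imp_le norm_ge_zero norm_zero order_trans)
  ultimately show ?thesis
    using le[OF w] R by auto
next
  case False
  moreover have "0 \<le> B"
    using le[of 0] R by (metis less_imp_le norm_ge_zero norm_zero order_trans)
  ultimately have B: "0 < B" and wR: "norm w < R"
    using w by auto
  \<comment> \<open>Dividing by \<open>2 * B\<close> rather than \<open>B\<close> gives the strict bound that \<open>Schwarz_Lemma\<close> needs.\<close>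
  define G where "G u = g (complex_of_real R * u) / complex_of_real (2 * B)" for u
  have Ru: "norm (complex_of_real R * u) < 1" if "norm u < 1" for u
    using R that mult_left_le_one_le[of "norm u" R] by (simp add: norm_mult)
  have "(g \<circ> (\<lambda>u. complex_of_real R * u)) holomorphic_on ball 0 1"
    using Ru by (intro holomorphic_on_compose_gen[OF _ g]) (auto intro!: holomorphic_intros)
  then have "G holomorphic_on ball 0 1"
    unfolding G_def[abs_def] o_def using B by (intro holomorphic_intros) auto
  moreover have "G 0 = 0"
    using g0 by (simp add: G_def)
  moreover have "norm (G u) < 1" if "norm u < 1" for u
    using le[of "complex_of_real R * u"] that R B mult_left_le_one_le[of "norm u" R]
    by (simp add: G_def norm_divide norm_mult)
  moreover have "norm (w / complex_of_real R) < 1"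
    using wR R by (simp add: norm_divide)
  ultimately have "norm (G (w / complex_of_real R)) \<le> norm (w / complex_of_real R)"
    by (rule Schwarz_Lemma(1))
  then show ?thesis
    using R B by (simp add: G_def norm_divide field_simps)
qed

lemma norm_Cesaro_t_iter_le_on_cball:
  assumes t: "0 \<le> t" "t < 1" and f: "f holomorphic_on ball 0 1" and \<rho>: "\<rho> < 1"
    and le: "\<And>w. norm w \<le> \<rho> \<Longrightarrow> norm (f w) \<le> B" and w: "norm w \<le> \<rho>"
  shows "norm ((Cesaro_t t ^^ n) f w) \<le> B / (1 - t)"
proof -
  have B: "0 \<le> B"
    using le[of 0] w by (metis norm_ge_zero norm_zero order_trans)
  have "norm (f u) \<le> B * (norm u ^ 0 / (1 - t * norm u) ^ Suc 0)" if "norm u \<le> \<rho>" for u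
  proof -
    have "0 < 1 - t * norm u" "1 - t * norm u \<le> 1"
      using one_minus_mult_pos[OF t norm_ge_zero, of u] that \<rho> by auto
    then have "B \<le> B * (1 / (1 - t * norm u))"
      using B by (simp add: le_divide_eq mult_left_le)
    then show ?thesis
      using le[OF that] by simp
  qed
  then have "norm ((Cesaro_t t ^^ n) f w) \<le> B / real (Suc 0) ^ n * (norm w ^ 0 / (1 - t * norm w) ^ Suc 0)"
    by (rule norm_Cesaro_t_iter_le[OF t f \<rho> _ w])
  also have "\<dots> = B / (1 - t * norm w)"
    by simp
  also have "\<dots> \<le> B / (1 - t)"
    using one_minus_mult_pos[OF t norm_ge_zero, of w] w \<rho> B t
    by (intro divide_left_mono mult_pos_pos) auto
  finally show ?thesis .
qed

lemma norm_Cesaro_t_iter_le_on_cball_vanishing: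
  assumes t: "0 \<le> t" "t < 1" and g: "g holomorphic_on ball 0 1" "g 0 = 0" and R: "0 < R" "R < 1"
    and le: "\<And>w. norm w \<le> R \<Longrightarrow> norm (g w) \<le> B" and w: "norm w \<le> R"
  shows "norm ((Cesaro_t t ^^ n) g w) \<le> 2 * B / R / 2 ^ n * (norm w / (1 - t) ^ 2)"
proof -
  have B: "0 \<le> B"
    using le[of 0] R by (metis less_imp_le norm_ge_zero norm_zero order_trans)
  have "norm (g u) \<le> 2 * B / R * (norm u ^ 1 / (1 - t * norm u) ^ Suc 1)" if "norm u \<le> R" for u
  proof -
    have "0 < 1 - t * norm u" "1 - t * norm u \<le> 1"
      using one_minus_mult_pos[OF t norm_ge_zero, of u] that R by auto
    then have "norm u \<le> norm u / (1 - t * norm u) ^ 2"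
      by (simp add: le_divide_eq power_le_one mult_left_le)
    then have "2 * B / R * norm u \<le> 2 * B / R * (norm u / (1 - t * norm u) ^ 2)"
      using B R by (intro mult_left_mono) auto
    then show ?thesis
      using Schwarz_Lemma_scaled[OF g R le that] by (simp add: power2_eq_square)
  qed
  then have "norm ((Cesaro_t t ^^ n) g w)
      \<le> 2 * B / R / real (Suc 1) ^ n * (norm w ^ 1 / (1 - t * norm w) ^ Suc 1)"
    by (rule norm_Cesaro_t_iter_le[OF t g(1) R(2) _ w])
  also have "\<dots> = 2 * B / R / 2 ^ n * (norm w / (1 - t * norm w) ^ 2)"
    by (simp add: numeral_2_eq_2)
  also have "\<dots> \<le> 2 * B / R / 2 ^ n * (norm w / (1 - t) ^ 2)"
  proof (rule mult_left_mono)
    have "1 - t \<le> 1 - t * norm w" "0 < 1 - t"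
      using one_minus_mult_pos[OF t norm_ge_zero, of w] w R t by auto
    then show "norm w / (1 - t * norm w) ^ 2 \<le> norm w / (1 - t) ^ 2"
      by (intro divide_left_mono power_mono mult_pos_pos) auto
  qed (use B R in auto)
  finally show ?thesis .
qed

section \<open>Weighted spaces\<close>

lemma weight_antimono: "is_weight v \<Longrightarrow> 0 \<le> r \<Longrightarrow> r \<le> s \<Longrightarrow> s < 1 \<Longrightarrow> v s \<le> v r"
  by (simp add: is_weight_def)

lemma weight_pos: "is_weight v \<Longrightarrow> 0 \<le> r \<Longrightarrow> r < 1 \<Longrightarrow> 0 < v r"
  by (simp add: is_weight_def)

lemma Hinf_v_holomorphic: "f \<in> Hinf_v v \<Longrightarrow> f holomorphic_on ball 0 1"
  by (simp add: Hinf_v_def)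

lemma wnorm_ge:
  assumes "f \<in> Hinf_v v" "z \<in> ball 0 1"
  shows "cmod (f z) * v (cmod z) \<le> wnorm v f"
proof -
  obtain M where M: "\<forall>z\<in>ball 0 1. cmod (f z) * v (cmod z) \<le> M"
    using assms(1) by (auto simp: Hinf_v_def)
  have "bdd_above ((\<lambda>z. cmod (f z) * v (cmod z)) ` ball 0 1)"
    by (rule bdd_aboveI2[of _ _ M]) (use M in blast)
  then show ?thesis
    unfolding wnorm_def by (rule cSUP_upper[OF assms(2)])
qed

lemma wnorm_le:
  assumes "\<And>z. z \<in> ball 0 1 \<Longrightarrow> cmod (h z) * v (cmod z) \<le> K"
  shows "wnorm v h \<le> K"
  unfolding wnorm_def by (rule cSUP_least) (use assms in auto)

lemma wnorm_nonneg:
  assumes "is_weight v" "f \<in> Hinf_v v"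
  shows "0 \<le> wnorm v f"
proof -
  have "0 \<le> cmod (f 0) * v (cmod 0)"
    using weight_pos[OF assms(1), of 0] by simp
  also have "\<dots> \<le> wnorm v f"
    using wnorm_ge[OF assms(2), of 0] by simp
  finally show ?thesis .
qed

lemma norm_le_wnorm_div_weight:
  assumes v: "is_weight v" and f: "f \<in> Hinf_v v" and z: "norm z \<le> \<rho>" "\<rho> < 1"
  shows "cmod (f z) \<le> wnorm v f / v \<rho>"
proof -
  have "cmod (f z) * v \<rho> \<le> cmod (f z) * v (cmod z)"
    using weight_antimono[OF v norm_ge_zero z] by (simp add: mult_left_mono)
  also have "\<dots> \<le> wnorm v f"
    using wnorm_ge[OF f] z by simp
  finally show ?thesis
    using weight_pos[OF v, of \<rho>] z by (simp add: field_simps order_trans[OF norm_ge_zero])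
qed

lemma H0_v_subset_Hinf_v:
  assumes v: "is_weight v"
  shows "H0_v v \<subseteq> Hinf_v v"
proof
  fix f assume "f \<in> H0_v v"
  then have f: "f holomorphic_on ball 0 1"
    and "\<exists>r<1. \<forall>z. r < cmod z \<and> cmod z < 1 \<longrightarrow> cmod (f z) * v (cmod z) < 1"
    by (auto simp: H0_v_def)
  then obtain r1 where r1: "r1 < 1"
    and outer: "\<And>z. r1 < cmod z \<Longrightarrow> cmod z < 1 \<Longrightarrow> cmod (f z) * v (cmod z) < 1"
    by blast
  define r where "r = max r1 0"
  have r: "0 \<le> r" "r < 1"
    using r1 by (auto simp: r_def)
  have "cball 0 r \<subseteq> ball (0::complex) 1"
    using r by auto
  then have "compact (f ` cball 0 r)"
    using holomorphic_on_imp_continuous_on[OF f] continuous_on_subset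
    by (intro compact_continuous_image) auto
  then obtain B where "\<And>y. y \<in> f ` cball 0 r \<Longrightarrow> norm y \<le> B"
    using compact_imp_bounded bounded_iff by metis
  then have B: "\<And>z. cmod z \<le> r \<Longrightarrow> cmod (f z) \<le> B"
    by simp
  have "cmod (f z) * v (cmod z) \<le> max 1 (B * v 0)" if z: "z \<in> ball 0 1" for z
  proof (cases "cmod z \<le> r")
    case True
    then have "cmod (f z) * v (cmod z) \<le> B * v 0"
      using B[OF True] weight_antimono[OF v, of 0 "cmod z"] weight_pos[OF v, of "cmod z"] z
      by (intro mult_mono') auto
    then show ?thesis
      by simp
  next
    case False
    then have "cmod (f z) * v (cmod z) < 1"
      using outer[of z] z by (simp add: r_def)
    then show ?thesis
      by simp
  qed
  then show "f \<in> Hinf_v v"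
    unfolding Hinf_v_def using f by blast
qed

lemma weight_eventually_less:
  fixes v :: "real \<Rightarrow> real"
  assumes "(v \<longlongrightarrow> 0) (at_left 1)" "0 < \<delta>"
  shows "\<exists>r<1. \<forall>x. r < x \<longrightarrow> x < 1 \<longrightarrow> v x < \<delta>"
proof -
  have "eventually (\<lambda>x. dist (v x) 0 < \<delta>) (at_left (1::real))"
    using tendstoD[OF assms] .
  then show ?thesis
    unfolding eventually_at_left_field by (force simp: abs_less_iff)
qed

lemma bounded_holomorphic_in_Hinf_v:
  assumes v: "is_weight v" and h: "h holomorphic_on ball 0 1"
    and B: "\<And>z. z \<in> ball 0 1 \<Longrightarrow> cmod (h z) \<le> B"
  shows "h \<in> Hinf_v v"
proof -
  have "cmod (h z) * v (cmod z) \<le> B * v 0" if z: "z \<in> ball 0 1" for z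
    using B[OF z] weight_antimono[OF v, of 0 "cmod z"] weight_pos[OF v, of "cmod z"] z
    by (intro mult_mono') auto
  then show ?thesis
    unfolding Hinf_v_def using h by blast
qed

lemma bounded_holomorphic_in_H0_v:
  assumes v: "is_weight v" and v1: "(v \<longlongrightarrow> 0) (at_left 1)" and h: "h holomorphic_on ball 0 1"
    and B: "\<And>z. z \<in> ball 0 1 \<Longrightarrow> cmod (h z) \<le> B"
  shows "h \<in> H0_v v"
proof -
  have B0: "0 \<le> B"
    using B[of 0] by (simp add: order_trans[OF norm_ge_zero])
  have "\<exists>r<1. \<forall>z. r < cmod z \<and> cmod z < 1 \<longrightarrow> cmod (h z) * v (cmod z) < e" if e: "0 < e" for e
  proof -
    obtain r where r: "r < 1" "\<And>x. r < x \<Longrightarrow> x < 1 \<Longrightarrow> v x < e / (B + 1)"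
      using weight_eventually_less[OF v1, of "e / (B + 1)"] e B0 by auto
    have "cmod (h z) * v (cmod z) < e" if z: "r < cmod z" "cmod z < 1" for z
    proof -
      have vz: "0 < v (cmod z)"
        using weight_pos[OF v, of "cmod z"] z by simp
      have "cmod (h z) * v (cmod z) \<le> B * (e / (B + 1))"
        using B[of z] r(2)[OF z] z vz B0 by (intro mult_mono) auto
      also have "\<dots> < e"
        using e B0 by (simp add: field_simps)
      finally show ?thesis .
    qed
    then show ?thesis
      using r by blast
  qed
  then show ?thesis
    using h by (simp add: H0_v_def)
qed

lemma Hinf_v_mult_diff:
  assumes v: "is_weight v" and f: "f \<in> Hinf_v v" and g: "g \<in> Hinf_v v"
  shows "(\<lambda>z. c * f z - g z) \<in> Hinf_v v"
proof -
  have "cmod (c * f z - g z) * v (cmod z) \<le> cmod c * wnorm v f + wnorm v g" if z: "z \<in> ball 0 1" for z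
  proof -
    have "cmod (c * f z - g z) * v (cmod z) \<le> (cmod c * cmod (f z) + cmod (g z)) * v (cmod z)"
      using weight_pos[OF v, of "cmod z"] z
      by (intro mult_right_mono) (auto simp: norm_mult intro: order_trans[OF norm_triangle_ineq4])
    also have "\<dots> = cmod c * (cmod (f z) * v (cmod z)) + cmod (g z) * v (cmod z)"
      by (simp add: algebra_simps)
    also have "\<dots> \<le> cmod c * wnorm v f + wnorm v g"
      using wnorm_ge[OF f z] wnorm_ge[OF g z] by (intro add_mono mult_left_mono) auto
    finally show ?thesis .
  qed
  moreover have "(\<lambda>z. c * f z - g z) holomorphic_on ball 0 1"
    using Hinf_v_holomorphic[OF f] Hinf_v_holomorphic[OF g] by (intro holomorphic_intros)
  ultimately show ?thesis
    unfolding Hinf_v_def by blast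
qed

lemma H0_v_max_modulus_vanishing:
  assumes v: "is_weight v" and v1: "(v \<longlongrightarrow> 0) (at_left 1)" and f: "f \<in> H0_v v" and \<epsilon>: "0 < \<epsilon>"
  shows "\<exists>r<1. \<forall>\<rho> w. r < \<rho> \<longrightarrow> \<rho> < 1 \<longrightarrow> norm w \<le> \<rho> \<longrightarrow> cmod (f w) * v \<rho> \<le> \<epsilon>"
proof -
  have fH: "f \<in> Hinf_v v"
    using H0_v_subset_Hinf_v[OF v] f by blast
  define N where "N = wnorm v f"
  have N: "0 \<le> N"
    unfolding N_def by (rule wnorm_nonneg[OF v fH])
  obtain r1 where r1: "r1 < 1" "\<And>\<xi>. r1 < cmod \<xi> \<Longrightarrow> cmod \<xi> < 1 \<Longrightarrow> cmod (f \<xi>) * v (cmod \<xi>) < \<epsilon>"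
    using f \<epsilon> by (auto simp: H0_v_def)
  define r where "r = max r1 0"
  have r: "0 \<le> r" "r < 1" "r1 \<le> r"
    using r1 by (auto simp: r_def)
  have vr: "0 < v r"
    using weight_pos[OF v] r by simp
  obtain r2 where r2: "r2 < 1" "\<And>x. r2 < x \<Longrightarrow> x < 1 \<Longrightarrow> v x < \<epsilon> * v r / (N + 1)"
    using weight_eventually_less[OF v1, of "\<epsilon> * v r / (N + 1)"] \<epsilon> vr N by auto
  have "cmod (f w) * v \<rho> \<le> \<epsilon>" if \<rho>: "max r r2 < \<rho>" "\<rho> < 1" and w: "norm w \<le> \<rho>" for \<rho> w
  proof (cases "norm w \<le> r")
    case True
    have "cmod (f w) * v \<rho> \<le> N / v r * (\<epsilon> * v r / (N + 1))"
      using norm_le_wnorm_div_weight[OF v fH True r(2)] r2(2)[of \<rho>] \<rho> weight_pos[OF v, of \<rho>] r N vr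
      unfolding N_def by (intro mult_mono) auto
    also have "\<dots> \<le> \<epsilon>"
      using vr N \<epsilon> by (simp add: field_simps)
    finally show ?thesis .
  next
    case False
    have "cmod (f w) * v \<rho> \<le> cmod (f w) * v (cmod w)"
      using weight_antimono[OF v, of "cmod w" \<rho>] w \<rho> by (simp add: mult_left_mono)
    also have "\<dots> < \<epsilon>"
      using r1(2)[of w] False r w \<rho> by auto
    finally show ?thesis by simp
  qed
  then show ?thesis
    using r r2 by (metis max_less_iff_conj)
qed

lemma weighted_norm_Cesaro_t_iter_le:
  assumes v: "is_weight v" and t: "0 \<le> t" "t < 1" and f: "f \<in> Hinf_v v" and z: "z \<in> ball 0 1"
  shows "cmod ((Cesaro_t t ^^ n) f z) * v (cmod z) \<le> wnorm v f / (1 - t)"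
proof -
  have vz: "0 < v (cmod z)"
    using weight_pos[OF v] z by simp
  have "cmod ((Cesaro_t t ^^ n) f z) \<le> wnorm v f / v (cmod z) / (1 - t)"
    using z norm_le_wnorm_div_weight[OF v f]
    by (intro norm_Cesaro_t_iter_le_on_cball[OF t Hinf_v_holomorphic[OF f], of "cmod z"]) auto
  then show ?thesis
    using vz t by (simp add: field_simps)
qed

lemma Cesaro_t_in_Hinf_v:
  assumes v: "is_weight v" and t: "0 \<le> t" "t < 1" and f: "f \<in> Hinf_v v"
  shows "Cesaro_t t f \<in> Hinf_v v"
proof -
  have "\<forall>z\<in>ball 0 1. cmod (Cesaro_t t f z) * v (cmod z) \<le> wnorm v f / (1 - t)"
    using weighted_norm_Cesaro_t_iter_le[OF v t f, of _ 1] by simp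
  then show ?thesis
    using holomorphic_on_Cesaro_t[OF t Hinf_v_holomorphic[OF f]] unfolding Hinf_v_def by blast
qed

lemma Cesaro_t_in_H0_v:
  assumes v: "is_weight v" and v1: "(v \<longlongrightarrow> 0) (at_left 1)" and t: "0 \<le> t" "t < 1"
    and f: "f \<in> H0_v v"
  shows "Cesaro_t t f \<in> H0_v v"
proof -
  have "\<exists>r<1. \<forall>z. r < cmod z \<and> cmod z < 1 \<longrightarrow> cmod (Cesaro_t t f z) * v (cmod z) < e"
    if e: "0 < e" for e
  proof -
    obtain r where r: "r < 1"
      and small: "\<And>\<rho> w. r < \<rho> \<Longrightarrow> \<rho> < 1 \<Longrightarrow> norm w \<le> \<rho> \<Longrightarrow> cmod (f w) * v \<rho> \<le> e * (1 - t) / 2"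
      using H0_v_max_modulus_vanishing[OF v v1 f, of "e * (1 - t) / 2"] e t by auto
    have "cmod (Cesaro_t t f z) * v (cmod z) < e" if z: "r < cmod z" "cmod z < 1" for z
    proof -
      have vz: "0 < v (cmod z)"
        using weight_pos[OF v, of "cmod z"] z by simp
      have "cmod ((Cesaro_t t ^^ 1) f z) \<le> e * (1 - t) / 2 / v (cmod z) / (1 - t)"
        using small[OF z] vz
        by (intro norm_Cesaro_t_iter_le_on_cball[OF t _ z(2)])
           (auto simp: field_simps H0_v_def[of v] intro: f[unfolded H0_v_def, THEN CollectD, THEN conjunct1])
      then have "cmod (Cesaro_t t f z) * v (cmod z) \<le> e * (1 - t) / 2 / v (cmod z) / (1 - t) * v (cmod z)"
        using vz by (intro mult_right_mono) auto
      also have "\<dots> < e"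
        using vz t e by (simp add: field_simps)
      finally show ?thesis .
    qed
    then show ?thesis
      using r by blast
  qed
  then show ?thesis
    using holomorphic_on_Cesaro_t[OF t] f by (simp add: H0_v_def)
qed

lemma norm_Cesaro_eigen_0_le:
  assumes t: "0 \<le> t" "t < 1" and w: "norm w \<le> 1"
  shows "norm (Cesaro_eigen t 0 w) \<le> 1 / (1 - t)"
proof -
  have "1 - t \<le> 1 - t * norm w"
    using w t mult_left_le[of "norm w" t] by simp
  also have "\<dots> \<le> norm (1 - complex_of_real t * w)"
    using norm_one_minus_mult_ge[OF t(1) order_refl] .
  finally show ?thesis
    using t by (simp add: Cesaro_eigen_def norm_divide frac_le)
qed

lemma norm_mult_Cesaro_eigen_0_le:
  assumes t: "0 \<le> t" "t < 1" and z: "z \<in> ball 0 1"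
  shows "cmod (c * Cesaro_eigen t 0 z) \<le> cmod c * (1 / (1 - t))"
proof -
  have "cmod (Cesaro_eigen t 0 z) \<le> 1 / (1 - t)"
    using norm_Cesaro_eigen_0_le[OF t, of z] z by simp
  from mult_left_mono[OF this norm_ge_zero[of c]] show ?thesis
    by (simp add: norm_mult)
qed

lemma norm_one_plus_mult_le: "z \<in> ball 0 1 \<Longrightarrow> cmod (1 + L * z) \<le> 1 + cmod L"
proof -
  assume z: "z \<in> ball 0 1"
  have "cmod (1 + L * z) \<le> 1 + cmod L * cmod z"
    using norm_triangle_ineq[of 1 "L * z"] by (simp add: norm_mult)
  also have "\<dots> \<le> 1 + cmod L"
    using z mult_left_le[of "cmod z" "cmod L"] by simp
  finally show ?thesis .
qed

lemma weight_mult_le: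
  assumes v: "is_weight v" and x: "0 \<le> x" "x < 1"
  shows "v x * x \<le> v 0 / v (1/2) * (v (max x (1/2)) * max x (1/2))"
proof (cases "1/2 \<le> x")
  case True
  have "1 \<le> v 0 / v (1/2)"
    using weight_antimono[OF v, of 0 "1/2"] weight_pos[OF v, of "1/2"] by simp
  then have "1 * (v x * x) \<le> v 0 / v (1/2) * (v x * x)"
    using weight_pos[OF v, of x] x by (intro mult_right_mono) auto
  then show ?thesis
    using True by simp
next
  case False
  have "v x * x \<le> v 0 * (1/2)"
    using weight_antimono[OF v, of 0 x] weight_pos[OF v, of 0] False x by (intro mult_mono) auto
  then show ?thesis
    using False weight_pos[OF v, of "1/2"] by simp
qed

lemma weighted_norm_Cesaro_t_iter_diff_le:
  assumes v: "is_weight v" and t: "0 \<le> t" "t < 1" and f: "f \<in> Hinf_v v" and z: "z \<in> ball 0 1"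
  shows "cmod ((Cesaro_t t ^^ n) f z - f 0 * Cesaro_eigen t 0 z) * v (cmod z)
       \<le> 4 * v 0 / (v (1/2) * (1 - t) ^ 3) / 2 ^ n * wnorm v f"
proof -
  define N where "N = wnorm v f"
  have N: "0 \<le> N"
    unfolding N_def by (rule wnorm_nonneg[OF v f])
  \<comment> \<open>On the disc of radius \<open>R\<close> the Schwarz factor \<open>1/R\<close> is at most 2, and \<open>weight_mult_le\<close>
    trades \<open>v(|z|) |z|\<close> for \<open>v(R) R\<close>.\<close>
  define R where "R = max (cmod z) (1/2)"
  have R: "0 < R" "R < 1" "cmod z \<le> R"
    using z by (auto simp: R_def)
  have vR: "0 < v R"
    using weight_pos[OF v] R by simp
  define g where "g = (\<lambda>w. f w - f 0 * Cesaro_eigen t 0 w)"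
  have "g holomorphic_on ball 0 1"
    unfolding g_def using Hinf_v_holomorphic[OF f] holomorphic_on_Cesaro_eigen[OF t]
    by (intro holomorphic_intros)
  moreover have "g 0 = 0"
    by (simp add: g_def Cesaro_eigen_def)
  ultimately have g: "g holomorphic_on ball 0 1" "g 0 = 0" .
  have "cmod (g w) \<le> 2 * N / (v R * (1 - t))" if w: "cmod w \<le> R" for w
  proof -
    have "cmod (f w) \<le> N / v R" "cmod (f 0) \<le> N / v R"
      using norm_le_wnorm_div_weight[OF v f] w R by (auto simp: N_def)
    moreover have "cmod (Cesaro_eigen t 0 w) \<le> 1 / (1 - t)"
      using norm_Cesaro_eigen_0_le[OF t] w R by simp
    moreover have "N / v R \<le> N / v R / (1 - t)"
      using N vR t by (simp add: le_divide_eq mult_left_le)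
    ultimately have "cmod (f w) + cmod (f 0) * cmod (Cesaro_eigen t 0 w) \<le> N / v R / (1 - t) + N / v R * (1 / (1 - t))"
      using N vR by (intro add_mono mult_mono) auto
    moreover have "cmod (g w) \<le> cmod (f w) + cmod (f 0) * cmod (Cesaro_eigen t 0 w)"
      unfolding g_def by (metis norm_mult norm_triangle_ineq4)
    moreover have "N / v R / (1 - t) + N / v R * (1 / (1 - t)) = 2 * N / (v R * (1 - t))"
      by (simp add: field_simps)
    ultimately show ?thesis
      by linarith
  qed
  then have "cmod ((Cesaro_t t ^^ n) g z) \<le> 2 * (2 * N / (v R * (1 - t))) / R / 2 ^ n * (cmod z / (1 - t) ^ 2)"
    by (rule norm_Cesaro_t_iter_le_on_cball_vanishing[OF t g R(1,2) _ R(3)])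
  also have "\<dots> = 4 * N / ((1 - t) ^ 3 * 2 ^ n) * (cmod z / (v R * R))"
    using vR R t by (simp add: field_simps power2_eq_square power3_eq_cube)
  finally have "cmod ((Cesaro_t t ^^ n) g z) * v (cmod z)
      \<le> 4 * N / ((1 - t) ^ 3 * 2 ^ n) * (cmod z / (v R * R)) * v (cmod z)"
    using weight_pos[OF v, of "cmod z"] z by (intro mult_right_mono) auto
  also have "\<dots> = 4 * N / ((1 - t) ^ 3 * 2 ^ n) * ((v (cmod z) * cmod z) / (v R * R))"
    by (simp add: field_simps)
  also have "\<dots> \<le> 4 * N / ((1 - t) ^ 3 * 2 ^ n) * (v 0 / v (1/2))"
    using weight_mult_le[OF v norm_ge_zero, of z] z vR R N t
    by (intro mult_left_mono) (auto simp: R_def divide_le_eq)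
  also have "\<dots> = 4 * v 0 / (v (1/2) * (1 - t) ^ 3) / 2 ^ n * wnorm v f"
    by (simp add: N_def field_simps)
  finally show ?thesis
    using Cesaro_t_iter_diff_Cesaro_eigen_0[OF t Hinf_v_holomorphic[OF f] z] by (simp add: g_def)
qed

section \<open>Power boundedness, mean ergodicity and supercyclicity\<close>

lemma funpow_in_invariant_set: "(\<And>f. f \<in> X \<Longrightarrow> T f \<in> X) \<Longrightarrow> g \<in> X \<Longrightarrow> (T ^^ n) g \<in> X"
  by (induction n) auto

lemma power_bounded_onI:
  assumes "\<And>f. f \<in> X \<Longrightarrow> T f \<in> X"
    and "\<And>f z n. f \<in> X \<Longrightarrow> z \<in> ball 0 1 \<Longrightarrow> cmod ((T ^^ n) f z) * v (cmod z) \<le> M * wnorm v f"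
  shows "power_bounded_on X (wnorm v) T"
  unfolding power_bounded_on_def using assms by (blast intro: wnorm_le)

lemma uniformly_mean_ergodic_onI:
  assumes v: "is_weight v" and X: "X \<subseteq> Hinf_v v"
    and T: "\<And>f. f \<in> X \<Longrightarrow> T f \<in> X" and P: "\<And>f. f \<in> X \<Longrightarrow> P f \<in> X"
    and q: "0 \<le> q" "q < 1" and K: "0 \<le> K"
    and conv: "\<And>f z m. f \<in> X \<Longrightarrow> z \<in> ball 0 1 \<Longrightarrow>
                 cmod ((T ^^ m) f z - P f z) * v (cmod z) \<le> K * q ^ m * wnorm v f"
  shows "uniformly_mean_ergodic_on X (wnorm v) T"
  unfolding uniformly_mean_ergodic_on_def
proof (intro conjI ballI exI[of _ P] allI impI)
  fix e :: real assume e: "0 < e"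
  show "\<exists>n0. \<forall>n\<ge>n0. \<forall>f\<in>X. wnorm v (\<lambda>z. cesaro_mean n T f z - P f z) \<le> e * wnorm v f"
  proof (intro exI allI impI ballI)
    fix n f assume n: "nat \<lceil>K / (e * (1 - q))\<rceil> + 1 \<le> n" and f: "f \<in> X"
    have N: "0 \<le> wnorm v f"
      using wnorm_nonneg[OF v] X f by blast
    have n_pos: "0 < n" and "K / (e * (1 - q)) \<le> real n"
      using n by linarith+
    then have Kn: "K / (1 - q) / real n \<le> e"
      using e q by (simp add: field_simps)
    have geom: "(\<Sum>m=1..n. q ^ m) \<le> 1 / (1 - q)"
      using sum_le_suminf[OF summable_geometric, of q "{1..n}"] suminf_geometric[of q] q by simp
    show "wnorm v (\<lambda>z. cesaro_mean n T f z - P f z) \<le> e * wnorm v f"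
    proof (rule wnorm_le)
      fix z :: complex assume z: "z \<in> ball 0 1"
      have vz: "0 \<le> v (cmod z)"
        using weight_pos[OF v, of "cmod z"] z by simp
      have "cesaro_mean n T f z - P f z = (\<Sum>m=1..n. (T ^^ m) f z - P f z) / of_nat n"
        using n_pos by (simp add: cesaro_mean_def sum_subtractf field_simps)
      then have "cmod (cesaro_mean n T f z - P f z) * v (cmod z)
          \<le> (\<Sum>m=1..n. cmod ((T ^^ m) f z - P f z) * v (cmod z)) / real n"
        using vz n_pos
        by (auto simp: norm_divide sum_distrib_right[symmetric] intro!: divide_right_mono mult_right_mono norm_sum)
      also have "\<dots> \<le> (\<Sum>m=1..n. K * q ^ m * wnorm v f) / real n"
        using conv[OF f z] by (intro divide_right_mono sum_mono) auto
      also have "\<dots> = K * wnorm v f * (\<Sum>m=1..n. q ^ m) / real n"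
        by (simp add: sum_distrib_left mult_ac)
      also have "\<dots> \<le> K * wnorm v f * (1 / (1 - q)) / real n"
        using geom K N by (intro divide_right_mono mult_left_mono) auto
      also have "\<dots> = K / (1 - q) / real n * wnorm v f"
        by simp
      also have "\<dots> \<le> e * wnorm v f"
        using Kn N by (rule mult_right_mono)
      finally show "cmod (cesaro_mean n T f z - P f z) * v (cmod z) \<le> e * wnorm v f" .
    qed
  qed
qed (use T P in auto)

lemma not_supercyclic_onI:
  assumes v: "is_weight v" and X: "X \<subseteq> Hinf_v v" and T: "\<And>f. f \<in> X \<Longrightarrow> T f \<in> X"
    and lines: "\<And>L. (\<lambda>z. 1 + L * z) \<in> X"
    and fix0: "\<And>g n. g \<in> X \<Longrightarrow> (T ^^ n) g 0 = g 0"
    and bounded_orbit: "\<And>g. g \<in> X \<Longrightarrow> \<exists>G. \<forall>n. cmod ((T ^^ n) g (1/2)) \<le> G"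
  shows "\<not> supercyclic_on X (wnorm v) T"
proof
  assume "supercyclic_on X (wnorm v) T"
  then obtain g where g: "g \<in> X"
    and approx: "\<And>f e. f \<in> X \<Longrightarrow> 0 < e \<Longrightarrow> \<exists>(c::complex) n. wnorm v (\<lambda>z. c * (T ^^ n) g z - f z) < e"
    unfolding supercyclic_on_def by blast
  obtain G where G: "\<And>n. cmod ((T ^^ n) g (1/2)) \<le> G"
    using bounded_orbit[OF g] by blast
  have G0: "0 \<le> G"
    using G[of 0] by (simp add: order_trans[OF norm_ge_zero])
  define a where "a = cmod (g 0)"
  \<comment> \<open>If \<open>a = 0\<close> then \<open>G / a = 0\<close>; that case is refuted by the value at \<open>0\<close> alone.\<close>
  define L where "L = complex_of_real (2 * (2 * G / a + 2))"
  have v0: "0 < v 0" and vh: "0 < v (1/2)"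
    using weight_pos[OF v] by auto
  obtain c n where cn: "wnorm v (\<lambda>z. c * (T ^^ n) g z - (1 + L * z)) < min (v 0) (v (1/2))"
    using approx[OF lines] v0 vh by (metis min_less_iff_conj)
  have "(\<lambda>z. c * (T ^^ n) g z - (1 + L * z)) \<in> Hinf_v v"
    using funpow_in_invariant_set[OF T g] lines X by (intro Hinf_v_mult_diff[OF v]) auto
  note h = this
  have close: "cmod (c * (T ^^ n) g z - (1 + L * z)) * v (cmod z) < v (cmod z)"
    if "z = 0 \<or> z = 1/2" for z
  proof -
    have "z \<in> ball 0 1" "min (v 0) (v (1/2)) \<le> v (cmod z)"
      using that by (elim disjE; hypsubst; simp)+
    then show ?thesis
      using wnorm_ge[OF h] cn by fastforce
  qed
  from close[of 0] have near_1: "cmod (c * g 0 - 1) < 1"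
    using fix0[OF g] v0 by simp
  then have ca: "cmod c * a < 2"
    using norm_triangle_ineq2[of "c * g 0" 1] by (simp add: a_def norm_mult)
  from close[of "1/2"] have "cmod (c * (T ^^ n) g (1/2) - (1 + L / 2)) < 1"
    using vh by simp
  then have "cmod (1 + L / 2) < cmod c * G + 1"
    using G[of n] norm_triangle_ineq2[of "1 + L / 2" "c * (T ^^ n) g (1/2)"]
      mult_left_mono[OF G[of n], of "cmod c"]
    by (simp add: norm_mult norm_minus_commute)
  also have "\<dots> \<le> 2 * G / a + 1"
  proof (cases "a = 0")
    case False
    then have "cmod c \<le> 2 / a"
      using ca by (simp add: a_def field_simps)
    then show ?thesis
      using G0 mult_right_mono[of "cmod c" "2 / a" G] by simp
  qed (use near_1 in \<open>simp add: a_def\<close>)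
  also have "\<dots> < cmod (complex_of_real (2 * G / a + 3))"
    unfolding norm_of_real using G0 by (simp add: a_def)
  also have "complex_of_real (2 * G / a + 3) = 1 + L / 2"
    by (simp add: L_def)
  finally show False
    by simp
qed

lemma Cesaro_t_power_bounded_mean_ergodic_not_supercyclic:
  assumes v: "is_weight v" and t: "0 \<le> t" "t < 1"
    and X: "X \<subseteq> Hinf_v v" and CX: "\<And>f. f \<in> X \<Longrightarrow> Cesaro_t t f \<in> X"
    and eigen: "\<And>c. (\<lambda>z. c * Cesaro_eigen t 0 z) \<in> X" and lines: "\<And>L. (\<lambda>z. 1 + L * z) \<in> X"
  shows "power_bounded_on X (wnorm v) (Cesaro_t t)
       \<and> uniformly_mean_ergodic_on X (wnorm v) (Cesaro_t t)
       \<and> \<not> supercyclic_on X (wnorm v) (Cesaro_t t)"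
proof (intro conjI)
  show "power_bounded_on X (wnorm v) (Cesaro_t t)"
    using weighted_norm_Cesaro_t_iter_le[OF v t] X
    by (intro power_bounded_onI[OF CX, where M = "1 / (1 - t)"]) auto
  have "0 \<le> 4 * v 0 / (v (1/2) * (1 - t) ^ 3)"
    using weight_pos[OF v, of 0] weight_pos[OF v, of "1/2"] t by simp
  then show "uniformly_mean_ergodic_on X (wnorm v) (Cesaro_t t)"
    using weighted_norm_Cesaro_t_iter_diff_le[OF v t] X eigen
    by (intro uniformly_mean_ergodic_onI[OF v X CX, where P = "\<lambda>f z. f 0 * Cesaro_eigen t 0 z"
          and q = "1/2" and K = "4 * v 0 / (v (1/2) * (1 - t) ^ 3)"])
       (auto simp: power_one_over)
  have "cmod ((Cesaro_t t ^^ n) g (1/2)) \<le> wnorm v g / ((1 - t) * v (1/2))" if "g \<in> X" for g n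
    using weighted_norm_Cesaro_t_iter_le[OF v t, of g "1/2" n] that X weight_pos[OF v, of "1/2"] t
    by (auto simp: field_simps)
  then show "\<not> supercyclic_on X (wnorm v) (Cesaro_t t)"
    by (intro not_supercyclic_onI[OF v X CX lines]) auto
qed

theorem proposition3p2:
  fixes v :: "real \<Rightarrow> real" and t :: real
  assumes "is_weight v"
    and "(v \<longlongrightarrow> 0) (at_left 1)"
    and "0 \<le> t" and "t < 1"
  shows "power_bounded_on (Hinf_v v) (wnorm v) (Cesaro_t t)
       \<and> uniformly_mean_ergodic_on (Hinf_v v) (wnorm v) (Cesaro_t t)
       \<and> \<not> supercyclic_on (Hinf_v v) (wnorm v) (Cesaro_t t)
       \<and> power_bounded_on (H0_v v) (wnorm v) (Cesaro_t t)
       \<and> uniformly_mean_ergodic_on (H0_v v) (wnorm v) (Cesaro_t t)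
       \<and> \<not> supercyclic_on (H0_v v) (wnorm v) (Cesaro_t t)"
proof -
  note v = assms(1) and v1 = assms(2) and t = assms(3,4)
  have eigen_hol: "(\<lambda>z. c * Cesaro_eigen t 0 z) holomorphic_on ball 0 1" for c
    using holomorphic_on_Cesaro_eigen[OF t] by (intro holomorphic_intros)
  have line_hol: "(\<lambda>z. 1 + L * z) holomorphic_on ball 0 1" for L :: complex
    by (intro holomorphic_intros)
  note eigen_bdd = norm_mult_Cesaro_eigen_0_le[OF t] and line_bdd = norm_one_plus_mult_le
  have "power_bounded_on (Hinf_v v) (wnorm v) (Cesaro_t t)
       \<and> uniformly_mean_ergodic_on (Hinf_v v) (wnorm v) (Cesaro_t t)
       \<and> \<not> supercyclic_on (Hinf_v v) (wnorm v) (Cesaro_t t)"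
    by (rule Cesaro_t_power_bounded_mean_ergodic_not_supercyclic[OF v t order_refl
          Cesaro_t_in_Hinf_v[OF v t] bounded_holomorphic_in_Hinf_v[OF v eigen_hol eigen_bdd]
          bounded_holomorphic_in_Hinf_v[OF v line_hol line_bdd]])
  moreover have "power_bounded_on (H0_v v) (wnorm v) (Cesaro_t t)
       \<and> uniformly_mean_ergodic_on (H0_v v) (wnorm v) (Cesaro_t t)
       \<and> \<not> supercyclic_on (H0_v v) (wnorm v) (Cesaro_t t)"
    by (rule Cesaro_t_power_bounded_mean_ergodic_not_supercyclic[OF v t H0_v_subset_Hinf_v[OF v]
          Cesaro_t_in_H0_v[OF v v1 t] bounded_holomorphic_in_H0_v[OF v v1 eigen_hol eigen_bdd]
          bounded_holomorphic_in_H0_v[OF v v1 line_hol line_bdd]])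
  ultimately show ?thesis
    by blast
qed

end
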